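(* Let $\pi_3$ be the five-dimensional complex associative algebra with basis $e_1,\dots,e_5$ and nonzero products $e_1e_1=e_2$, $e_1e_2=e_2e_1=e_3$, $e_1e_4=e_5$, $e_4e_4=e_5$ (all other products of basis elements are zero). The vector space $LocDer(\pi_3)$ of all local derivations of $\pi_3$ is a Lie algebra with respect to the bracket $[\nabla,\Delta]=\nabla\Delta-\Delta\nabla$; that is, $[\nabla,\Delta]\in LocDer(\pi_3)$ for all $\nabla,\Delta\in LocDer(\pi_3)$.
   Context: A derivation of an algebra $A$ is a linear map $D$ with $D(xy)=D(x)y+xD(y)$ for all $x,y\in A$. A linear map $\nabla:A\to A$ is a local derivation if for every $x\in A$ there is a derivation $D_x$ of $A$ (depending on $x$) with $\nabla(x)=D_x(x)$. *)

theory Defs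
  imports Complex_Main
begin

datatype basis = E1 | E2 | E3 | E4 | E5

type_synonym pi3 = "basis \<Rightarrow> complex"

text \<open>Multiplication of pi3, extended bilinearly from
 e1e1 = e2, e1e2 = e2e1 = e3, e1e4 = e5, e4e4 = e5 (other products of basis elements zero).\<close>

definition pi3_mult :: "pi3 \<Rightarrow> pi3 \<Rightarrow> pi3" where
  "pi3_mult x y = (\<lambda>i. case i of
       E1 \<Rightarrow> 0
     | E2 \<Rightarrow> x E1 * y E1
     | E3 \<Rightarrow> x E1 * y E2 + x E2 * y E1
     | E4 \<Rightarrow> 0
     | E5 \<Rightarrow> x E1 * y E4 + x E4 * y E4)"

definition pi3_linear :: "(pi3 \<Rightarrow> pi3) \<Rightarrow> bool" where
  "pi3_linear f \<longleftrightarrow>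
     (\<forall>x y. f (\<lambda>i. x i + y i) = (\<lambda>i. f x i + f y i)) \<and>
     (\<forall>(c::complex) x. f (\<lambda>i. c * x i) = (\<lambda>i. c * f x i))"

definition pi3_derivation :: "(pi3 \<Rightarrow> pi3) \<Rightarrow> bool" where
  "pi3_derivation D \<longleftrightarrow> pi3_linear D \<and>
     (\<forall>x y. D (pi3_mult x y) = (\<lambda>i. pi3_mult (D x) y i + pi3_mult x (D y) i))"

definition pi3_local_derivation :: "(pi3 \<Rightarrow> pi3) \<Rightarrow> bool" where
  "pi3_local_derivation N \<longleftrightarrow> pi3_linear N \<and>
     (\<forall>x. \<exists>D. pi3_derivation D \<and> N x = D x)"

definition pi3_bracket :: "(pi3 \<Rightarrow> pi3) \<Rightarrow> (pi3 \<Rightarrow> pi3) \<Rightarrow> (pi3 \<Rightarrow> pi3)" where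
  "pi3_bracket N M = (\<lambda>x i. N (M x) i - M (N x) i)"

end

theory Submission
  imports Defs
begin

text \<open>A derivation of pi3 is determined by its values on the generators e1 and e4, which leaves
  six free matrix entries. Testing a local derivation on basis vectors and on sums of two of
  them shows that its matrix has the same shape, except that the (3,2) entry is no longer tied
  to the (2,1) entry: seven free entries. Conversely, every linear map of this shape agrees at
  each point x with some derivation: if x1 \<noteq> 0 the discrepancy in coordinate 3 is absorbed by
  the free (3,1) entry, and if x1 = 0 the (2,1) entry is invisible. The shape is stable under
  commutators (the diagonal parts cancel), so local derivations are closed under the bracket.\<close>

definition pi3_unit :: "basis \<Rightarrow> pi3" where
  "pi3_unit k = (\<lambda>i. if i = k then 1 else 0)"

lemma pi3_linear_add: "pi3_linear f \<Longrightarrow> f (\<lambda>i. x i + y i) = (\<lambda>i. f x i + f y i)"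
  unfolding pi3_linear_def by blast

lemma pi3_linear_scale: "pi3_linear f \<Longrightarrow> f (\<lambda>i. c * x i) = (\<lambda>i. c * f x i)"
  unfolding pi3_linear_def by blast

lemma pi3_linear_zero:
  assumes "pi3_linear f"
  shows "f (\<lambda>i. 0) = (\<lambda>i. 0)"
  using pi3_linear_scale[OF assms, of 0 "pi3_unit E1"] by simp

lemma pi3_linear_expand:
  assumes "pi3_linear f"
  shows "f x j = x E1 * f (pi3_unit E1) j + (x E2 * f (pi3_unit E2) j + (x E3 * f (pi3_unit E3) j
           + (x E4 * f (pi3_unit E4) j + x E5 * f (pi3_unit E5) j)))"
proof -
  have "x = (\<lambda>i. x E1 * pi3_unit E1 i + (x E2 * pi3_unit E2 i + (x E3 * pi3_unit E3 i
           + (x E4 * pi3_unit E4 i + x E5 * pi3_unit E5 i))))" (is "x = ?combination")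
  proof
    fix i
    show "x i = ?combination i"
      by (cases i) (simp_all add: pi3_unit_def)
  qed
  then have "f x j = f ?combination j"
    by simp
  then show ?thesis
    by (simp add: pi3_linear_add[OF assms] pi3_linear_scale[OF assms])
qed

definition pi3_der_map ::
    "complex \<Rightarrow> complex \<Rightarrow> complex \<Rightarrow> complex \<Rightarrow> complex \<Rightarrow> complex \<Rightarrow> pi3 \<Rightarrow> pi3" where
  "pi3_der_map a1 a2 a3 a5 b3 b5 x = (\<lambda>i. case i of
       E1 \<Rightarrow> a1 * x E1
     | E2 \<Rightarrow> a2 * x E1 + 2 * a1 * x E2
     | E3 \<Rightarrow> a3 * x E1 + 2 * a2 * x E2 + 3 * a1 * x E3 + b3 * x E4
     | E4 \<Rightarrow> a1 * x E4
     | E5 \<Rightarrow> a5 * x E1 + b5 * x E4 + 2 * a1 * x E5)"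

lemma pi3_derivation_der_map: "pi3_derivation (pi3_der_map a1 a2 a3 a5 b3 b5)"
  unfolding pi3_derivation_def pi3_linear_def
  by (simp add: fun_eq_iff pi3_der_map_def pi3_mult_def algebra_simps split: basis.split)

lemma pi3_derivation_eq_der_map:
  assumes "pi3_derivation D"
  shows "D = pi3_der_map (D (pi3_unit E1) E1) (D (pi3_unit E1) E2) (D (pi3_unit E1) E3)
               (D (pi3_unit E1) E5) (D (pi3_unit E4) E3) (D (pi3_unit E4) E5)"
proof -
  let ?e = pi3_unit
  have lin: "pi3_linear D"
    and leibniz: "\<And>x y. D (pi3_mult x y) = (\<lambda>i. pi3_mult (D x) y i + pi3_mult x (D y) i)"
    using assms unfolding pi3_derivation_def by auto
  have unit_products: "pi3_mult (?e E1) (?e E1) = ?e E2" "pi3_mult (?e E1) (?e E2) = ?e E3"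
    "pi3_mult (?e E1) (?e E4) = ?e E5" "pi3_mult (?e E4) (?e E4) = ?e E5"
    "pi3_mult (?e E4) (?e E1) = (\<lambda>i. 0)"
    by (simp_all add: fun_eq_iff pi3_unit_def pi3_mult_def split: basis.split)
  note products = leibniz[of "?e E1" "?e E1"] leibniz[of "?e E1" "?e E2"]
    leibniz[of "?e E1" "?e E4"] leibniz[of "?e E4" "?e E4"] leibniz[of "?e E4" "?e E1"]
  note coordinates = products[unfolded unit_products pi3_linear_zero[OF lin], THEN fun_cong]
  have vanishing: "D (?e E4) E1 = 0" "D (?e E4) E2 = 0" "D (?e E1) E4 = 0"
    using coordinates(5)[of E2] coordinates(5)[of E3] coordinates(5)[of E5]
    by (simp_all add: pi3_mult_def pi3_unit_def)
  have diagonal: "D (?e E4) E4 = D (?e E1) E1"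
    using coordinates(3)[of E5] coordinates(4)[of E5] vanishing
    by (simp add: pi3_mult_def pi3_unit_def)
  have column2: "D (?e E2) j = (case j of E2 \<Rightarrow> 2 * D (?e E1) E1 | E3 \<Rightarrow> 2 * D (?e E1) E2
      | _ \<Rightarrow> 0)" for j
    using coordinates(1)[of j] vanishing by (cases j) (simp_all add: pi3_mult_def pi3_unit_def)
  have column3: "D (?e E3) j = (case j of E3 \<Rightarrow> 3 * D (?e E1) E1 | _ \<Rightarrow> 0)" for j
    using coordinates(2)[of j] vanishing column2
    by (cases j) (simp_all add: pi3_mult_def pi3_unit_def)
  have column5: "D (?e E5) j = (case j of E5 \<Rightarrow> 2 * D (?e E1) E1 | _ \<Rightarrow> 0)" for j
    using coordinates(4)[of j] vanishing diagonal
    by (cases j) (simp_all add: pi3_mult_def pi3_unit_def)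
  show ?thesis
  proof (intro ext)
    fix x j
    show "D x j = pi3_der_map (D (?e E1) E1) (D (?e E1) E2) (D (?e E1) E3) (D (?e E1) E5)
        (D (?e E4) E3) (D (?e E4) E5) x j"
      using pi3_linear_expand[OF lin, of x j] column2 column3 column5 vanishing diagonal
      by (cases j) (simp_all add: pi3_der_map_def algebra_simps)
  qed
qed

lemma pi3_local_derivation_at:
  assumes "pi3_local_derivation N"
  shows "\<exists>a1 a2 a3 a5 b3 b5. N x E1 = a1 * x E1 \<and>
           N x E2 = a2 * x E1 + 2 * a1 * x E2 \<and>
           N x E3 = a3 * x E1 + 2 * a2 * x E2 + 3 * a1 * x E3 + b3 * x E4 \<and>
           N x E4 = a1 * x E4 \<and>
           N x E5 = a5 * x E1 + b5 * x E4 + 2 * a1 * x E5"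
proof -
  obtain D where "pi3_derivation D" "N x = D x"
    using assms unfolding pi3_local_derivation_def by blast
  then have "N x = pi3_der_map (D (pi3_unit E1) E1) (D (pi3_unit E1) E2) (D (pi3_unit E1) E3)
      (D (pi3_unit E1) E5) (D (pi3_unit E4) E3) (D (pi3_unit E4) E5) x"
    using pi3_derivation_eq_der_map by metis
  then show ?thesis
    unfolding pi3_der_map_def by (simp add: fun_eq_iff) blast
qed

definition pi3_local_der_map :: "complex \<Rightarrow> complex \<Rightarrow> complex \<Rightarrow> complex \<Rightarrow> complex \<Rightarrow> complex
    \<Rightarrow> complex \<Rightarrow> pi3 \<Rightarrow> pi3" where
  "pi3_local_der_map t p21 p31 p32 p34 p51 p54 x = (\<lambda>i. case i of
       E1 \<Rightarrow> t * x E1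
     | E2 \<Rightarrow> p21 * x E1 + 2 * t * x E2
     | E3 \<Rightarrow> p31 * x E1 + p32 * x E2 + 3 * t * x E3 + p34 * x E4
     | E4 \<Rightarrow> t * x E4
     | E5 \<Rightarrow> p51 * x E1 + p54 * x E4 + 2 * t * x E5)"

lemma pi3_local_derivation_eq_local_der_map:
  assumes loc: "pi3_local_derivation N"
  shows "N = pi3_local_der_map (N (pi3_unit E1) E1) (N (pi3_unit E1) E2) (N (pi3_unit E1) E3)
               (N (pi3_unit E2) E3) (N (pi3_unit E4) E3) (N (pi3_unit E1) E5) (N (pi3_unit E4) E5)"
proof -
  let ?e = pi3_unit
  have lin: "pi3_linear N"
    using loc unfolding pi3_local_derivation_def by blast
  note at = pi3_local_derivation_at[OF loc]
  have zeros: "N (?e E1) E4 = 0"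
    "N (?e E2) E1 = 0" "N (?e E2) E4 = 0" "N (?e E2) E5 = 0"
    "N (?e E3) E1 = 0" "N (?e E3) E2 = 0" "N (?e E3) E4 = 0" "N (?e E3) E5 = 0"
    "N (?e E4) E1 = 0" "N (?e E4) E2 = 0"
    "N (?e E5) E1 = 0" "N (?e E5) E2 = 0" "N (?e E5) E3 = 0" "N (?e E5) E4 = 0"
    using at[of "?e E1"] at[of "?e E2"] at[of "?e E3"] at[of "?e E4"] at[of "?e E5"]
    by (auto simp: pi3_unit_def pi3_linear_add[OF lin])
  have "N (?e E4) E4 = N (?e E1) E1"
    using at[of "\<lambda>i. ?e E1 i + ?e E4 i"] zeros
    by (auto simp: pi3_unit_def pi3_linear_add[OF lin])
  moreover have "N (?e E2) E2 = 2 * N (?e E4) E4"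
    using at[of "\<lambda>i. ?e E2 i + ?e E4 i"] zeros
    by (auto simp: pi3_unit_def pi3_linear_add[OF lin])
  moreover have "N (?e E5) E5 = N (?e E2) E2"
    using at[of "\<lambda>i. ?e E2 i + ?e E5 i"] zeros
    by (auto simp: pi3_unit_def pi3_linear_add[OF lin])
  moreover have "2 * N (?e E3) E3 = 3 * N (?e E5) E5"
    using at[of "\<lambda>i. ?e E3 i + ?e E5 i"] zeros
    by (auto simp: pi3_unit_def pi3_linear_add[OF lin])
  ultimately have diagonal: "N (?e E4) E4 = N (?e E1) E1" "N (?e E2) E2 = 2 * N (?e E1) E1"
    "N (?e E3) E3 = 3 * N (?e E1) E1" "N (?e E5) E5 = 2 * N (?e E1) E1"
    by simp_all
  show ?thesis
  proof (intro ext)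
    fix x j
    show "N x j = pi3_local_der_map (N (?e E1) E1) (N (?e E1) E2) (N (?e E1) E3)
        (N (?e E2) E3) (N (?e E4) E3) (N (?e E1) E5) (N (?e E4) E5) x j"
      using pi3_linear_expand[OF lin, of x j] zeros diagonal
      by (cases j) (simp_all add: pi3_local_der_map_def algebra_simps)
  qed
qed

lemma pi3_local_derivation_local_der_map:
  "pi3_local_derivation (pi3_local_der_map t p21 p31 p32 p34 p51 p54)"
  unfolding pi3_local_derivation_def
proof (intro conjI allI)
  show "pi3_linear (pi3_local_der_map t p21 p31 p32 p34 p51 p54)"
    unfolding pi3_linear_def
    by (simp add: fun_eq_iff pi3_local_der_map_def algebra_simps split: basis.split)
next
  fix x
  show "\<exists>D. pi3_derivation D \<and> pi3_local_der_map t p21 p31 p32 p34 p51 p54 x = D x"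
  proof (cases "x E1 = 0")
    case True
    then have "pi3_local_der_map t p21 p31 p32 p34 p51 p54 x
        = pi3_der_map t (p32 / 2) p31 p51 p34 p54 x"
      by (simp add: fun_eq_iff pi3_local_der_map_def pi3_der_map_def split: basis.split)
    then show ?thesis
      using pi3_derivation_der_map by blast
  next
    case False
    then have "pi3_local_der_map t p21 p31 p32 p34 p51 p54 x
        = pi3_der_map t p21 (p31 + (p32 - 2 * p21) * x E2 / x E1) p51 p34 p54 x"
      by (simp add: fun_eq_iff pi3_local_der_map_def pi3_der_map_def field_simps split: basis.split)
    then show ?thesis
      using pi3_derivation_der_map by blast
  qed
qed

lemma pi3_local_derivation_iff:
  "pi3_local_derivation N \<longleftrightarrow>
    (\<exists>t p21 p31 p32 p34 p51 p54. N = pi3_local_der_map t p21 p31 p32 p34 p51 p54)"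
  using pi3_local_derivation_eq_local_der_map pi3_local_derivation_local_der_map by metis

lemma pi3_bracket_local_der_map:
  "pi3_bracket (pi3_local_der_map t p21 p31 p32 p34 p51 p54)
      (pi3_local_der_map u q21 q31 q32 q34 q51 q54)
    = pi3_local_der_map 0 (t * q21 - u * p21) (2 * (t * q31 - u * p31) + p32 * q21 - q32 * p21)
        (t * q32 - u * p32) (2 * (t * q34 - u * p34)) (t * q51 - u * p51) (t * q54 - u * p54)"
  by (simp add: fun_eq_iff pi3_bracket_def pi3_local_der_map_def algebra_simps split: basis.split)

theorem theorem6p1:
  assumes "pi3_local_derivation N" and "pi3_local_derivation M"
  shows "pi3_local_derivation (pi3_bracket N M)"
proof -
  obtain t p21 p31 p32 p34 p51 p54 where N: "N = pi3_local_der_map t p21 p31 p32 p34 p51 p54"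
    using assms(1) pi3_local_derivation_iff by blast
  obtain u q21 q31 q32 q34 q51 q54 where M: "M = pi3_local_der_map u q21 q31 q32 q34 q51 q54"
    using assms(2) pi3_local_derivation_iff by blast
  show ?thesis
    unfolding N M pi3_bracket_local_der_map by (rule pi3_local_derivation_local_der_map)
qed

end
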